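(* Let $\mathcal{K}^{\langle\infty\rangle}$ be an unbounded simple nested fractal. Then $$\inf\big\{\mathrm{dist}(\Delta_0^{(1)},\Delta_0^{(2)}):\ \Delta_0^{(1)},\Delta_0^{(2)}\in\mathcal{T}_0,\ \Delta_0^{(1)}\cap\Delta_0^{(2)}=\emptyset\big\}>0.$$
   Context: Setting: $L>1$, $N\ge2$, $\nu_1=0,\dots,\nu_N\in\mathbb{R}^2$, $\Psi_i(x)=x/L+\nu_i$, and $\mathcal{K}^{\langle 0\rangle}=\bigcup_i\Psi_i(\mathcal{K}^{\langle 0\rangle})$ is a planar simple nested fractal (with $V_0^{\langle0\rangle}$ its set of essential fixed points, $k=\#V_0^{\langle0\rangle}\ge3$). $\mathcal{K}^{\langle M\rangle}=L^M\mathcal{K}^{\langle 0\rangle}$ for $M\in\mathbb{Z}$, $\mathcal{K}^{\langle\infty\rangle}=\bigcup_{M\ge0}\mathcal{K}^{\langle M\rangle}$. An $M$-complex is $\Delta_M=\mathcal{K}^{\langle M\rangle}+\sum_{j=M+1}^{J}L^j\nu_{i_j}$ for some $J\ge M+1$ and $i_j\in\{1,\dots,N\}$; $\mathcal{T}_M$ is the set of all $M$-complexes. For closed bounded $E,F$, $\mathrm{dist}(E,F)=\inf\{|x-y|:x\in E,y\in F\}$ (Euclidean). *)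

theory Defs
  imports "HOL-Analysis.Analysis"
begin

definition Psi :: "real \<Rightarrow> (nat \<Rightarrow> real^2) \<Rightarrow> nat \<Rightarrow> real^2 \<Rightarrow> real^2" where
  "Psi L nu i x = (1 / L) *\<^sub>R x + nu i"

definition Psi_word :: "real \<Rightarrow> (nat \<Rightarrow> real^2) \<Rightarrow> nat list \<Rightarrow> real^2 \<Rightarrow> real^2" where
  "Psi_word L nu w = foldr (\<lambda>i f. Psi L nu i \<circ> f) w id"

definition words :: "nat \<Rightarrow> nat \<Rightarrow> nat list set" where
  "words N n = {w. length w = n \<and> set w \<subseteq> {1..N}}"

definition fixpts :: "real \<Rightarrow> (nat \<Rightarrow> real^2) \<Rightarrow> nat \<Rightarrow> (real^2) set" where
  "fixpts L nu N = {x. \<exists>i\<in>{1..N}. Psi L nu i x = x}"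

definition V0 :: "real \<Rightarrow> (nat \<Rightarrow> real^2) \<Rightarrow> nat \<Rightarrow> (real^2) set" where
  "V0 L nu N = {x \<in> fixpts L nu N. \<exists>y \<in> fixpts L nu N. \<exists>i\<in>{1..N}. \<exists>j\<in>{1..N}.
                   i \<noteq> j \<and> Psi L nu i x = Psi L nu j y}"

definition Vn :: "real \<Rightarrow> (nat \<Rightarrow> real^2) \<Rightarrow> nat \<Rightarrow> nat \<Rightarrow> (real^2) set" where
  "Vn L nu N n = (\<Union>w\<in>words N n. Psi_word L nu w ` V0 L nu N)"

text \<open>Reflection in the perpendicular bisector of the segment [x,y] (x \<noteq> y).\<close>
definition refl_bisector :: "real^2 \<Rightarrow> real^2 \<Rightarrow> real^2 \<Rightarrow> real^2" where
  "refl_bisector x y z =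
     z - (2 * (((z - (1/2) *\<^sub>R (x + y)) \<bullet> (x - y)) / (norm (x - y))\<^sup>2)) *\<^sub>R (x - y)"

definition simple_nested_fractal ::
  "real \<Rightarrow> nat \<Rightarrow> (nat \<Rightarrow> real^2) \<Rightarrow> (real^2) set \<Rightarrow> bool" where
  "simple_nested_fractal L N nu K \<longleftrightarrow>
     L > 1 \<and> N \<ge> 2 \<and> nu 1 = 0 \<and>
     compact K \<and> K \<noteq> {} \<and> K = (\<Union>i\<in>{1..N}. Psi L nu i ` K) \<and>
     \<comment> \<open>at least two essential fixed points (here the planar setting requires k \<ge> 3)\<close>
     card (V0 L nu N) \<ge> 2 \<and>
     \<comment> \<open>open set condition\<close>
     (\<exists>U. open U \<and> bounded U \<and> U \<noteq> {} \<and>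
        (\<forall>i\<in>{1..N}. Psi L nu i ` U \<subseteq> U) \<and>
        (\<forall>i\<in>{1..N}. \<forall>j\<in>{1..N}. i \<noteq> j \<longrightarrow> Psi L nu i ` U \<inter> Psi L nu j ` U = {})) \<and>
     \<comment> \<open>connectivity: the graph of 1-cells with nonempty intersections is connected\<close>
     (\<forall>i\<in>{1..N}. \<forall>j\<in>{1..N}.
        (\<lambda>a b. a \<in> {1..N} \<and> b \<in> {1..N} \<and> Psi L nu a ` K \<inter> Psi L nu b ` K \<noteq> {})\<^sup>*\<^sup>* i j) \<and>
     \<comment> \<open>symmetry\<close>
     (\<forall>x\<in>V0 L nu N. \<forall>y\<in>V0 L nu N. x \<noteq> y \<longrightarrow>
        (\<forall>n. refl_bisector x y ` Vn L nu N n \<subseteq> Vn L nu N n)) \<and>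
     \<comment> \<open>nesting\<close>
     (\<forall>n. \<forall>w\<in>words N n. \<forall>w'\<in>words N n. w \<noteq> w' \<longrightarrow>
        Psi_word L nu w ` K \<inter> Psi_word L nu w' ` K =
        Psi_word L nu w ` V0 L nu N \<inter> Psi_word L nu w' ` V0 L nu N)"

definition complexes0 :: "real \<Rightarrow> nat \<Rightarrow> (nat \<Rightarrow> real^2) \<Rightarrow> (real^2) set \<Rightarrow> (real^2) set set" where
  "complexes0 L N nu K =
     {(\<lambda>x. x + (\<Sum>j\<in>{1..J}. (L ^ j) *\<^sub>R nu (i j))) ` K | J i.
        J \<ge> 1 \<and> (\<forall>j\<in>{1..J}. i j \<in> {1..N})}"

end

theory Submission
  imports Defs
begin

(*
  A 0-complex is a translate K + t with t = sum_{j=1..J} L^j nu_{i_j}; since nu_1 = 0, any two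
  complexes can be written with the same depth J. Peeling off i_1 gives
  K + t = L (Psi_{i_1}(K) + s) with s of depth J - 1, and Psi_i(K) is contained in K.
  If the translates K + s and K + s' are disjoint, induction and L > 1 bound the distance from
  below. Otherwise the nesting axiom, suitably rescaled, forces s' - s = v - v' for essential
  fixed points v, v', so t' - t lies in the finite set of vectors d = L (nu_b - nu_a + v - v'),
  and the distance is at least the least positive value of setdist(K, K + d) over those d with
  K and K + d disjoint. Disjoint complexes exist: K and K + L^J nu_2 for large J.
*)

(* shifts L N nu J = {sum_{j=1..J} L^j nu_{i_j} | i_1, ..., i_J in {1..N}}, generated from i_1 outwards. *)
fun shifts :: "real \<Rightarrow> nat \<Rightarrow> (nat \<Rightarrow> 'a::real_vector) \<Rightarrow> nat \<Rightarrow> 'a set" where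
  "shifts L N nu 0 = {0}"
| "shifts L N nu (Suc J) = (\<Union>a\<in>{1..N}. (\<lambda>s. L *\<^sub>R (nu a + s)) ` shifts L N nu J)"

lemma sum_in_shifts:
  assumes "\<forall>j\<in>{1..J}. i j \<in> {1..N}"
  shows "(\<Sum>j\<in>{1..J}. (L ^ j) *\<^sub>R nu (i j)) \<in> shifts L N nu J"
  using assms
proof (induction J arbitrary: i)
  case 0
  then show ?case by simp
next
  case (Suc J)
  have "(\<Sum>j\<in>{1..Suc J}. (L ^ j) *\<^sub>R nu (i j))
      = L *\<^sub>R nu (i 1) + (\<Sum>j\<in>{Suc 1..Suc J}. (L ^ j) *\<^sub>R nu (i j))"
    by (simp add: sum.atLeast_Suc_atMost del: sum.cl_ivl_Suc)
  also have "\<dots> = L *\<^sub>R (nu (i 1) + (\<Sum>j\<in>{1..J}. (L ^ j) *\<^sub>R nu (i (Suc j))))"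
    by (simp only: sum.shift_bounds_cl_Suc_ivl) (simp add: scaleR_sum_right scaleR_add_right)
  moreover have "(\<Sum>j\<in>{1..J}. (L ^ j) *\<^sub>R nu (i (Suc j))) \<in> shifts L N nu J"
    using Suc.prems by (intro Suc.IH) auto
  ultimately show ?case
    using Suc.prems by auto
qed

lemma shifts_mono:
  assumes "nu 1 = 0" "1 \<le> N" "J \<le> J'"
  shows "shifts L N nu J \<subseteq> shifts L N nu J'"
proof -
  have step: "shifts L N nu J \<subseteq> shifts L N nu (Suc J)" for J
  proof (induction J)
    case 0
    show ?case
      using assms(1,2) by (auto intro!: bexI[of _ 1])
  next
    case (Suc J)
    show ?case
    proof
      fix t
      assume "t \<in> shifts L N nu (Suc J)"
      then obtain a s where "a \<in> {1..N}" "s \<in> shifts L N nu J" "t = L *\<^sub>R (nu a + s)"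
        by auto
      with Suc.IH have "t \<in> (\<lambda>s. L *\<^sub>R (nu a + s)) ` shifts L N nu (Suc J)"
        by blast
      with \<open>a \<in> {1..N}\<close> show "t \<in> shifts L N nu (Suc (Suc J))"
        by (subst shifts.simps(2)) blast
    qed
  qed
  show ?thesis
    by (rule lift_Suc_mono_le[of "shifts L N nu", OF step assms(3)])
qed

lemma complexes0_shifts:
  assumes "A \<in> complexes0 L N nu K"
  obtains J t where "t \<in> shifts L N nu J" "A = (+) t ` K"
proof -
  obtain J i where "A = (\<lambda>x. x + (\<Sum>j\<in>{1..J}. (L ^ j) *\<^sub>R nu (i j))) ` K"
    and "\<forall>j\<in>{1..J}. i j \<in> {1..N}"
    using assms unfolding complexes0_def by blast
  moreover have "(\<lambda>x. x + t) = (+) t" for t :: "real^2"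
    by (simp add: fun_eq_iff add.commute)
  ultimately show ?thesis
    using that sum_in_shifts by metis
qed

lemma complexes0_common_depth:
  assumes "nu 1 = 0" "1 \<le> N" "A \<in> complexes0 L N nu K" "B \<in> complexes0 L N nu K"
  obtains J t t' where "t \<in> shifts L N nu J" "t' \<in> shifts L N nu J" "A = (+) t ` K" "B = (+) t' ` K"
proof -
  obtain J1 t1 J2 t2 where "t1 \<in> shifts L N nu J1" "A = (+) t1 ` K"
    and "t2 \<in> shifts L N nu J2" "B = (+) t2 ` K"
    using complexes0_shifts assms(3,4) by metis
  moreover have "shifts L N nu J \<subseteq> shifts L N nu (max J1 J2)" if "J \<le> max J1 J2" for J
    using shifts_mono[of nu N J "max J1 J2" L] assms(1,2) that by simp
  ultimately show ?thesis
    using that[of t1 "max J1 J2" t2] by (meson max.cobounded1 max.cobounded2 subsetD)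
qed

lemma Psi_word_append: "Psi_word L nu (u @ w) = Psi_word L nu u \<circ> Psi_word L nu w"
  by (induction u) (simp_all add: Psi_word_def)

lemma shifts_Psi_word:
  assumes "L \<noteq> 0" "t \<in> shifts L N nu J"
  shows "\<exists>w\<in>words N J. Psi_word L nu w = (\<lambda>x. (1 / L ^ J) *\<^sub>R (x + t))"
  using assms(2)
proof (induction J arbitrary: t)
  case 0
  then show ?case by (simp add: words_def Psi_word_def fun_eq_iff)
next
  case (Suc J)
  then obtain a s where a: "a \<in> {1..N}" and s: "s \<in> shifts L N nu J"
    and t: "t = L *\<^sub>R (nu a + s)" by auto
  obtain w where w: "w \<in> words N J" "Psi_word L nu w = (\<lambda>x. (1 / L ^ J) *\<^sub>R (x + s))"
    using Suc.IH[OF s] by blast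
  have "Psi_word L nu [a] = Psi L nu a"
    by (simp add: Psi_word_def)
  then have "Psi_word L nu (w @ [a]) = (\<lambda>x. (1 / L ^ Suc J) *\<^sub>R (x + t))"
    using assms(1) by (simp add: Psi_word_append w(2) t fun_eq_iff Psi_def algebra_simps)
  moreover have "w @ [a] \<in> words N (Suc J)"
    using w(1) a by (simp add: words_def)
  ultimately show ?case by blast
qed

lemma meeting_translates_differ_by_vertices:
  assumes nest: "\<forall>w\<in>words N J. \<forall>w'\<in>words N J. w \<noteq> w' \<longrightarrow>
      Psi_word L nu w ` K \<inter> Psi_word L nu w' ` K = Psi_word L nu w ` V \<inter> Psi_word L nu w' ` V"
    and "L \<noteq> 0" "V \<noteq> {}"
    and t: "t \<in> shifts L N nu J" and t': "t' \<in> shifts L N nu J"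
    and meet: "(+) t ` K \<inter> (+) t' ` K \<noteq> {}"
  shows "\<exists>v\<in>V. \<exists>v'\<in>V. t' - t = v - v'"
proof (cases "t = t'")
  case True
  then show ?thesis using \<open>V \<noteq> {}\<close> by auto
next
  case False
  obtain w where w: "w \<in> words N J" "Psi_word L nu w = (\<lambda>x. (1 / L ^ J) *\<^sub>R (x + t))"
    using shifts_Psi_word[OF \<open>L \<noteq> 0\<close> t] by blast
  obtain w' where w': "w' \<in> words N J" "Psi_word L nu w' = (\<lambda>x. (1 / L ^ J) *\<^sub>R (x + t'))"
    using shifts_Psi_word[OF \<open>L \<noteq> 0\<close> t'] by blast
  have "w \<noteq> w'"
    using False w(2) w'(2) \<open>L \<noteq> 0\<close> by (auto simp: fun_eq_iff)
  obtain z where "z \<in> (+) t ` K" "z \<in> (+) t' ` K"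
    using meet by blast
  then have "(1 / L ^ J) *\<^sub>R z \<in> Psi_word L nu w ` K \<inter> Psi_word L nu w' ` K"
    unfolding w(2) w'(2) by (auto simp: add.commute)
  then have "(1 / L ^ J) *\<^sub>R z \<in> Psi_word L nu w ` V \<inter> Psi_word L nu w' ` V"
    using nest w(1) w'(1) \<open>w \<noteq> w'\<close> by blast
  then obtain v v' where v: "v \<in> V" "v' \<in> V"
    and "(1 / L ^ J) *\<^sub>R (v + t) = (1 / L ^ J) *\<^sub>R (v' + t')"
    unfolding w(2) w'(2) by auto
  then have "v + t = v' + t'"
    using \<open>L \<noteq> 0\<close> by (simp only: scaleR_cancel_left) simp
  then have "t' - t = v - v'"
    by (simp add: algebra_simps)
  with v show ?thesis by blast
qed

lemma disjoint_translates_separated: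
  assumes "L \<ge> 1"
    and invariant: "\<And>a. a \<in> {1..N} \<Longrightarrow> Psi L nu a ` K \<subseteq> K"
    and meet: "\<And>J t t'. t \<in> shifts L N nu J \<Longrightarrow> t' \<in> shifts L N nu J \<Longrightarrow>
      (+) t ` K \<inter> (+) t' ` K \<noteq> {} \<Longrightarrow> \<exists>v\<in>V. \<exists>v'\<in>V. t' - t = v - v'"
    and base: "\<And>a b v v'. a \<in> {1..N} \<Longrightarrow> b \<in> {1..N} \<Longrightarrow> v \<in> V \<Longrightarrow> v' \<in> V \<Longrightarrow>
      K \<inter> (+) (L *\<^sub>R (nu b - nu a + (v - v'))) ` K = {} \<Longrightarrow>
      c \<le> setdist K ((+) (L *\<^sub>R (nu b - nu a + (v - v'))) ` K)"
    and "t \<in> shifts L N nu J" "t' \<in> shifts L N nu J" "(+) t ` K \<inter> (+) t' ` K = {}"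
    and "x \<in> (+) t ` K" "y \<in> (+) t' ` K"
  shows "c \<le> dist x y"
  using assms(5-)
proof (induction J arbitrary: t t' x y)
  case 0
  then show ?case by simp
next
  case (Suc J)
  obtain a s where a: "a \<in> {1..N}" and s: "s \<in> shifts L N nu J" and t: "t = L *\<^sub>R (nu a + s)"
    using Suc.prems(1) by auto
  obtain b s' where b: "b \<in> {1..N}" and s': "s' \<in> shifts L N nu J" and t': "t' = L *\<^sub>R (nu b + s')"
    using Suc.prems(2) by auto
  obtain p q where p: "p \<in> K" "x = t + p" and q: "q \<in> K" "y = t' + q"
    using Suc.prems(4,5) by auto
  show ?case
  proof (cases "(+) s ` K \<inter> (+) s' ` K = {}")
    case True
    have "c \<le> dist (s + Psi L nu a p) (s' + Psi L nu b q)"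
      using invariant[OF a] invariant[OF b] p(1) q(1) by (intro Suc.IH[OF s s' True]) auto
    also have "\<dots> \<le> L * dist (s + Psi L nu a p) (s' + Psi L nu b q)"
      using \<open>L \<ge> 1\<close> by (simp add: mult_le_cancel_right1)
    also have "\<dots> = dist x y"
    proof -
      have "x - y = L *\<^sub>R ((s + Psi L nu a p) - (s' + Psi L nu b q))"
        using \<open>L \<ge> 1\<close> unfolding p(2) q(2) t t' by (simp add: Psi_def algebra_simps)
      then show ?thesis
        using \<open>L \<ge> 1\<close> by (simp add: dist_norm)
    qed
    finally show ?thesis .
  next
    case False
    then obtain v v' where "v \<in> V" "v' \<in> V" "s' - s = v - v'"
      using meet[OF s s'] by blast
    define d where "d = L *\<^sub>R (nu b - nu a + (v - v'))"
    have "t' = t + d"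
      using \<open>s' - s = v - v'\<close> unfolding t t' d_def by (simp add: algebra_simps flip: scaleR_add_right)
    then have "(+) t ` (K \<inter> (+) d ` K) = {}"
      using Suc.prems(3) by (simp add: translation_Int image_image add.assoc)
    then have "c \<le> setdist K ((+) d ` K)"
      unfolding d_def using a b \<open>v \<in> V\<close> \<open>v' \<in> V\<close> by (intro base) auto
    also have "\<dots> \<le> dist p (d + q)"
      using p(1) q(1) by (intro setdist_le_dist) auto
    also have "\<dots> = dist x y"
      unfolding p(2) q(2) \<open>t' = t + d\<close> by (simp add: add.assoc)
    finally show ?thesis .
  qed
qed

lemma setdist_disjoint_translates_uniformly_pos:
  fixes K :: "'a::euclidean_space set"
  assumes "finite D" "compact K" "K \<noteq> {}"
  obtains c where "c > 0" "\<And>d. d \<in> D \<Longrightarrow> K \<inter> (+) d ` K = {} \<Longrightarrow> c \<le> setdist K ((+) d ` K)"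
proof
  define C where "C = insert 1 ((\<lambda>d. setdist K ((+) d ` K)) ` {d \<in> D. K \<inter> (+) d ` K = {}})"
  have "finite C"
    using assms(1) by (simp add: C_def)
  moreover have "\<forall>r\<in>C. r > 0"
    using assms(2,3)
    by (auto simp: C_def setdist_gt_0_compact_closed compact_imp_closed closed_translation)
  ultimately show "Min C > 0"
    by (simp add: C_def)
  show "Min C \<le> setdist K ((+) d ` K)" if "d \<in> D" "K \<inter> (+) d ` K = {}" for d
    using \<open>finite C\<close> that by (intro Min_le) (auto simp: C_def)
qed

lemma bounded_disjoint_far_translates:
  fixes K :: "'a::real_normed_vector set"
  assumes "bounded K"
  obtains r where "\<And>d. r < norm d \<Longrightarrow> K \<inter> (+) d ` K = {}"
proof -
  obtain R where R: "\<And>x. x \<in> K \<Longrightarrow> norm x \<le> R"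
    using assms by (auto simp: bounded_iff)
  have "K \<inter> (+) d ` K = {}" if "2 * R < norm d" for d
  proof (rule ccontr)
    assume "K \<inter> (+) d ` K \<noteq> {}"
    then obtain w where "w \<in> K" "d + w \<in> K" by blast
    then have "norm d \<le> norm (d + w) + norm w"
      using norm_triangle_ineq4[of "d + w" w] by simp
    also have "\<dots> \<le> 2 * R"
      using R[OF \<open>w \<in> K\<close>] R[OF \<open>d + w \<in> K\<close>] by simp
    finally show False
      using that by simp
  qed
  then show ?thesis using that by blast
qed

lemma translate_in_complexes0:
  assumes "nu 1 = 0" "a \<in> {1..N}" "J \<ge> 1"
  shows "(+) ((L ^ J) *\<^sub>R nu a) ` K \<in> complexes0 L N nu K"
proof -
  define i where "i = (\<lambda>j. if j = J then a else 1)"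
  have "(\<Sum>j\<in>{1..J}. (L ^ j) *\<^sub>R nu (i j)) = (L ^ J) *\<^sub>R nu a"
    using assms by (simp add: i_def if_distrib cong: if_cong)
  then have "(+) ((L ^ J) *\<^sub>R nu a) ` K = (\<lambda>x. x + (\<Sum>j\<in>{1..J}. (L ^ j) *\<^sub>R nu (i j))) ` K"
    by (simp add: add.commute)
  moreover have "\<forall>j\<in>{1..J}. i j \<in> {1..N}"
    using assms(2) by (auto simp: i_def)
  ultimately show ?thesis
    using assms(3) unfolding complexes0_def by blast
qed

lemma simple_nested_fractalD:
  assumes "simple_nested_fractal L N nu K"
  shows "L > 1" "N \<ge> 2" "nu 1 = 0" "compact K" "K \<noteq> {}" "card (V0 L nu N) \<ge> 2"
    and "K = (\<Union>i\<in>{1..N}. Psi L nu i ` K)"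
    and "\<exists>U. U \<noteq> {} \<and>
      (\<forall>i\<in>{1..N}. \<forall>j\<in>{1..N}. i \<noteq> j \<longrightarrow> Psi L nu i ` U \<inter> Psi L nu j ` U = {})"
    and "\<forall>n. \<forall>w\<in>words N n. \<forall>w'\<in>words N n. w \<noteq> w' \<longrightarrow>
        Psi_word L nu w ` K \<inter> Psi_word L nu w' ` K =
        Psi_word L nu w ` V0 L nu N \<inter> Psi_word L nu w' ` V0 L nu N"
  by (insert assms[unfolded simple_nested_fractal_def]; elim conjE exE; (intro exI conjI)?; assumption)+

lemma simple_nested_fractal_nu_inj:
  assumes "simple_nested_fractal L N nu K"
  shows "inj_on nu {1..N}"
proof (rule inj_onI, rule ccontr)
  fix i j
  assume "i \<in> {1..N}" "j \<in> {1..N}" "nu i = nu j" "i \<noteq> j"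
  obtain U where "U \<noteq> {}"
    and osc: "\<forall>i\<in>{1..N}. \<forall>j\<in>{1..N}. i \<noteq> j \<longrightarrow> Psi L nu i ` U \<inter> Psi L nu j ` U = {}"
    using simple_nested_fractalD(8)[OF assms] by blast
  have "Psi L nu i = Psi L nu j"
    using \<open>nu i = nu j\<close> by (simp add: Psi_def fun_eq_iff)
  then have "Psi L nu i ` U = {}"
    using osc[rule_format, OF \<open>i \<in> {1..N}\<close> \<open>j \<in> {1..N}\<close> \<open>i \<noteq> j\<close>] by simp
  with \<open>U \<noteq> {}\<close> show False
    by simp
qed

lemma disjoint_complexes0_exist:
  assumes "simple_nested_fractal L N nu K"
  obtains A B where "A \<in> complexes0 L N nu K" "B \<in> complexes0 L N nu K" "A \<inter> B = {}"
proof -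
  note fractal = simple_nested_fractalD[OF assms]
  have "L > 1" "N \<ge> 2" "nu 1 = 0" "compact K"
    using fractal by simp_all
  have "nu 2 \<noteq> 0"
    using inj_onD[OF simple_nested_fractal_nu_inj[OF assms], of 2 1] \<open>nu 1 = 0\<close> \<open>N \<ge> 2\<close> by auto
  obtain r where r: "\<And>d. r < norm d \<Longrightarrow> K \<inter> (+) d ` K = {}"
    using bounded_disjoint_far_translates compact_imp_bounded[OF \<open>compact K\<close>] by blast
  obtain n where "r / norm (nu 2) < L ^ n"
    using real_arch_pow[OF \<open>L > 1\<close>] by blast
  also have "\<dots> \<le> L ^ Suc n"
    using \<open>L > 1\<close> by simp
  finally have "r < norm ((L ^ Suc n) *\<^sub>R nu 2)"
    using \<open>nu 2 \<noteq> 0\<close> \<open>L > 1\<close> by (simp add: pos_divide_less_eq)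
  have "K \<in> complexes0 L N nu K"
    using translate_in_complexes0[of nu 1 N 1 L K] \<open>nu 1 = 0\<close> \<open>N \<ge> 2\<close> by simp
  moreover have "(+) ((L ^ Suc n) *\<^sub>R nu 2) ` K \<in> complexes0 L N nu K"
    using translate_in_complexes0[of nu 2 N "Suc n" L K] \<open>nu 1 = 0\<close> \<open>N \<ge> 2\<close> by simp
  moreover have "K \<inter> (+) ((L ^ Suc n) *\<^sub>R nu 2) ` K = {}"
    using r \<open>r < norm ((L ^ Suc n) *\<^sub>R nu 2)\<close> .
  ultimately show ?thesis
    by (rule that)
qed

lemma shifted_copies_separated:
  assumes "simple_nested_fractal L N nu K"
  obtains c where "c > 0"
    "\<And>J t t' x y. t \<in> shifts L N nu J \<Longrightarrow> t' \<in> shifts L N nu J \<Longrightarrow>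
       (+) t ` K \<inter> (+) t' ` K = {} \<Longrightarrow> x \<in> (+) t ` K \<Longrightarrow> y \<in> (+) t' ` K \<Longrightarrow> c \<le> dist x y"
proof -
  note fractal = simple_nested_fractalD[OF assms]
  define V where "V = V0 L nu N"
  have "L > 1" "compact K" "K \<noteq> {}" "card V \<ge> 2"
    and self_similar: "K = (\<Union>i\<in>{1..N}. Psi L nu i ` K)"
    and nest: "\<forall>n. \<forall>w\<in>words N n. \<forall>w'\<in>words N n. w \<noteq> w' \<longrightarrow>
        Psi_word L nu w ` K \<inter> Psi_word L nu w' ` K = Psi_word L nu w ` V \<inter> Psi_word L nu w' ` V"
    using fractal unfolding V_def by simp_all
  have "finite V" "V \<noteq> {}"
    using \<open>card V \<ge> 2\<close> card_gt_0_iff[of V] by auto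
  define D where "D = (\<lambda>(a, b, v, v'). L *\<^sub>R (nu b - nu a + (v - v'))) ` ({1..N} \<times> {1..N} \<times> V \<times> V)"
  have "finite D"
    using \<open>finite V\<close> by (simp add: D_def)
  then obtain c where "c > 0"
    and c: "\<And>d. d \<in> D \<Longrightarrow> K \<inter> (+) d ` K = {} \<Longrightarrow> c \<le> setdist K ((+) d ` K)"
    using setdist_disjoint_translates_uniformly_pos \<open>compact K\<close> \<open>K \<noteq> {}\<close> by blast
  show ?thesis
  proof (rule that[OF \<open>c > 0\<close>], rule disjoint_translates_separated)
    show "L \<ge> 1"
      using \<open>L > 1\<close> by simp
    show "Psi L nu a ` K \<subseteq> K" if "a \<in> {1..N}" for a
      using self_similar that by blast
    show "\<exists>v\<in>V. \<exists>v'\<in>V. t' - t = v - v'"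
      if "t \<in> shifts L N nu J" "t' \<in> shifts L N nu J" "(+) t ` K \<inter> (+) t' ` K \<noteq> {}" for J t t'
      using \<open>L > 1\<close> \<open>V \<noteq> {}\<close> that
      by (intro meeting_translates_differ_by_vertices[OF nest[THEN spec]]) auto
    show "c \<le> setdist K ((+) (L *\<^sub>R (nu b - nu a + (v - v'))) ` K)"
      if "a \<in> {1..N}" "b \<in> {1..N}" "v \<in> V" "v' \<in> V"
        "K \<inter> (+) (L *\<^sub>R (nu b - nu a + (v - v'))) ` K = {}" for a b v v'
    proof (rule c[OF _ that(5)])
      show "L *\<^sub>R (nu b - nu a + (v - v')) \<in> D"
        unfolding D_def using that(1-4) by (intro image_eqI[where x = "(a, b, v, v')"]) auto
    qed
  qed
qed

lemma complexes0_separated: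
  assumes "simple_nested_fractal L N nu K"
  obtains c where "c > 0"
    "\<And>A B. A \<in> complexes0 L N nu K \<Longrightarrow> B \<in> complexes0 L N nu K \<Longrightarrow> A \<inter> B = {} \<Longrightarrow>
       c \<le> setdist A B"
proof -
  obtain c where "c > 0" and separated: "\<And>J t t' x y. t \<in> shifts L N nu J \<Longrightarrow> t' \<in> shifts L N nu J \<Longrightarrow>
       (+) t ` K \<inter> (+) t' ` K = {} \<Longrightarrow> x \<in> (+) t ` K \<Longrightarrow> y \<in> (+) t' ` K \<Longrightarrow> c \<le> dist x y"
    using shifted_copies_separated[OF assms] by blast
  have "nu 1 = 0" "1 \<le> N" "K \<noteq> {}"
    using simple_nested_fractalD[OF assms] by simp_all
  show ?thesis
  proof (rule that[OF \<open>c > 0\<close>])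
    fix A B
    assume A: "A \<in> complexes0 L N nu K" and B: "B \<in> complexes0 L N nu K" and "A \<inter> B = {}"
    obtain J t t' where "t \<in> shifts L N nu J" "t' \<in> shifts L N nu J"
      and "A = (+) t ` K" "B = (+) t' ` K"
      by (rule complexes0_common_depth[OF \<open>nu 1 = 0\<close> \<open>1 \<le> N\<close> A B])
    then show "c \<le> setdist A B"
      using separated \<open>A \<inter> B = {}\<close> \<open>K \<noteq> {}\<close> by (intro le_setdistI) auto
  qed
qed

theorem lemmaA1:
  fixes L :: real and N :: nat and nu :: "nat \<Rightarrow> real^2" and K :: "(real^2) set"
  assumes "simple_nested_fractal L N nu K"
    and "card (V0 L nu N) \<ge> 3"
  shows "Inf {setdist A B | A B. A \<in> complexes0 L N nu K \<and> B \<in> complexes0 L N nu K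
                                  \<and> A \<inter> B = {}} > 0"
proof -
  obtain c where "c > 0" and c: "\<And>A B. A \<in> complexes0 L N nu K \<Longrightarrow> B \<in> complexes0 L N nu K \<Longrightarrow>
      A \<inter> B = {} \<Longrightarrow> c \<le> setdist A B"
    using complexes0_separated[OF assms(1)] by blast
  obtain A B where "A \<in> complexes0 L N nu K" "B \<in> complexes0 L N nu K" "A \<inter> B = {}"
    using disjoint_complexes0_exist[OF assms(1)] by blast
  then have "c \<le> Inf {setdist A B | A B. A \<in> complexes0 L N nu K \<and> B \<in> complexes0 L N nu K
                                  \<and> A \<inter> B = {}}"
    using c by (intro cInf_greatest) auto
  with \<open>c > 0\<close> show ?thesis by simp
qed

end
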